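(* Let $p$ be a nonzero integer and let $d$ be an integer with $d \neq 0$, $d \neq -1$, such that $d$ and $d+1$ are both divisors of $2p$, and such that $2p\left(d + \frac{1}{d}\right)$, $2p\left(d + \frac{1}{d+1}\right)$ and $2p\left(\frac{1}{d} + \frac{d}{d+1}\right)$ are integers. Then $$\left\{-p - 2p\left(d + \frac{1}{d}\right)\right\}^3 + \left\{p + 2p\left(d + \frac{1}{d+1}\right)\right\}^3 + \left\{p + 2p\left(\frac{1}{d} + \frac{d}{d+1}\right)\right\}^3 = 3p^3,$$ so that $3p^3$ is represented as a sum of three integer cubes. *)

theory Defs
  imports Complex_Main
begin

end

theory Submission
  imports Defs
begin

(* Clearing denominators, the three summands are -p(2d^2+d+2)/d, p(2d^2+3d+3)/(d+1) and
   p(3d^2+3d+2)/(d(d+1)), so the identity reduces to one polynomial identity in d.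
   Integrality of the three summands is assumed, so the rational identity is one between
   integers. *)

lemma cubic_polynomial_identity:
  fixes d :: "'a::comm_ring_1"
  shows "(2*d^2 + 3*d + 3)^3 * d^3 + (3*d^2 + 3*d + 2)^3
           = (2*d^2 + d + 2)^3 * (d + 1)^3 + 3 * d^3 * (d + 1)^3"
  by (simp add: algebra_simps power2_eq_square power3_eq_cube numeral_eq_Suc)

lemma three_cubes_identity:
  fixes p d :: "'a::field"
  assumes d: "d \<noteq> 0" and d1: "d + 1 \<noteq> 0"
  shows "(- p - 2 * p * (d + 1 / d)) ^ 3 + (p + 2 * p * (d + 1 / (d + 1))) ^ 3
           + (p + 2 * p * (1 / d + d / (d + 1))) ^ 3 = 3 * p ^ 3"
proof -
  have dd1: "d * (d + 1) \<noteq> 0" using d d1 by simp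
  have x: "- p - 2 * p * (d + 1 / d) = - (p * (2*d^2 + d + 2) / d)"
    using d by (simp add: field_simps power2_eq_square)
  have y: "p + 2 * p * (d + 1 / (d + 1)) = p * (2*d^2 + 3*d + 3) / (d + 1)"
    using d1 by (simp add: field_simps power2_eq_square)
  have z: "p + 2 * p * (1 / d + d / (d + 1)) = p * (3*d^2 + 3*d + 2) / (d * (d + 1))"
    using d d1 dd1 by (simp add: field_simps power2_eq_square)
  have common_denominator: "(- (a / d)) ^ 3 + (b / e) ^ 3 + (c / (d * e)) ^ 3
      = (b^3 * d^3 + c^3 - a^3 * e^3) / (d^3 * e^3)" if "e \<noteq> 0" for a b c e
    using d that by (simp add: field_simps power_mult_distrib power_divide)
  have "(- (p * (2*d^2 + d + 2) / d)) ^ 3 + (p * (2*d^2 + 3*d + 3) / (d + 1)) ^ 3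
          + (p * (3*d^2 + 3*d + 2) / (d * (d + 1))) ^ 3
        = ((p * (2*d^2 + 3*d + 3))^3 * d^3 + (p * (3*d^2 + 3*d + 2))^3
            - (p * (2*d^2 + d + 2))^3 * (d + 1)^3) / (d^3 * (d + 1)^3)"
    by (rule common_denominator[OF d1])
  also have "\<dots> = p^3 * ((2*d^2 + 3*d + 3)^3 * d^3 + (3*d^2 + 3*d + 2)^3
            - (2*d^2 + d + 2)^3 * (d + 1)^3) / (d^3 * (d + 1)^3)"
    by (simp only: power_mult_distrib right_diff_distrib distrib_left[of "p ^ 3"] mult.assoc)
  also have "\<dots> = 3 * p ^ 3"
    using d d1 by (simp add: cubic_polynomial_identity)
  finally show ?thesis by (simp only: x y z)
qed

theorem lemma3p2:
  fixes p d :: int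
  assumes "p \<noteq> 0" and "d \<noteq> 0" and "d \<noteq> -1"
    and "d dvd 2 * p" and "(d + 1) dvd 2 * p"
    and "2 * of_int p * (of_int d + 1 / of_int d) \<in> (\<int> :: rat set)"
    and "2 * of_int p * (of_int d + 1 / (of_int d + 1)) \<in> (\<int> :: rat set)"
    and "2 * of_int p * (1 / of_int d + of_int d / (of_int d + 1)) \<in> (\<int> :: rat set)"
  shows "(- of_int p - 2 * of_int p * (of_int d + 1 / of_int d)) ^ 3
         + (of_int p + 2 * of_int p * (of_int d + 1 / (of_int d + 1))) ^ 3
         + (of_int p + 2 * of_int p * (1 / of_int d + of_int d / (of_int d + 1))) ^ 3
         = (3 * of_int p ^ 3 :: rat)
    \<and> (\<exists>x y z :: int. x ^ 3 + y ^ 3 + z ^ 3 = 3 * p ^ 3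
         \<and> of_int x = - of_int p - 2 * of_int p * (of_int d + 1 / (of_int d :: rat))
         \<and> of_int y = of_int p + 2 * of_int p * (of_int d + 1 / (of_int d + (1 :: rat)))
         \<and> of_int z = of_int p + 2 * of_int p * (1 / of_int d + of_int d / (of_int d + (1 :: rat))))"
proof -
  have "of_int d \<noteq> (0 :: rat)" "of_int d + 1 \<noteq> (0 :: rat)"
    using assms(2,3) by (simp_all add: add_eq_0_iff)
  note identity = three_cubes_identity[OF this, of "of_int p"]
  have "- of_int p - 2 * of_int p * (of_int d + 1 / of_int d) \<in> (\<int> :: rat set)"
    using assms(6) by simp
  then obtain x where x: "of_int x = - of_int p - 2 * of_int p * (of_int d + 1 / (of_int d :: rat))"
    by (metis Ints_cases)
  have "of_int p + 2 * of_int p * (of_int d + 1 / (of_int d + 1)) \<in> (\<int> :: rat set)"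
    using assms(7) by simp
  then obtain y where y: "of_int y = of_int p + 2 * of_int p * (of_int d + 1 / (of_int d + (1 :: rat)))"
    by (metis Ints_cases)
  have "of_int p + 2 * of_int p * (1 / of_int d + of_int d / (of_int d + 1)) \<in> (\<int> :: rat set)"
    using assms(8) by simp
  then obtain z where z: "of_int z = of_int p + 2 * of_int p * (1 / of_int d + of_int d / (of_int d + (1 :: rat)))"
    by (metis Ints_cases)
  have "(of_int (x ^ 3 + y ^ 3 + z ^ 3) :: rat) = of_int (3 * p ^ 3)"
    using identity by (simp add: x y z)
  then have "x ^ 3 + y ^ 3 + z ^ 3 = 3 * p ^ 3"
    by (simp only: of_int_eq_iff)
  with identity x y z show ?thesis by blast
qed

end
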